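(* In a partial synchronized communication system whose communication graph is an $n\times m$ grid communication graph, two starving robots can never be (at the same time) on circles lying in the same row.
   Context: Model. A system consists of pairwise disjoint unit circles in the plane (trajectories) and a communication range $r>0$. Its communication graph $G$ has the circles as vertices, two adjacent iff the distance between their centres is at most $2+r$. Positions on a circle are angles (mod $2\pi$). For an edge $(i,j)$, the link position $\phi_{ij}$ is the angle of the point of $C_i$ closest to $C_j$. A schedule $F=(f,g)$ assigns each circle a starting angle $f(C_i)$ and direction $g(C_i)\in\{1,-1\}$; a robot following it on $C_i$ is at $f(C_i)+g(C_i)2\pi t$ at time $t$. $F$ is a synchronization schedule if $g(C_i)=-g(C_j)$ for adjacent circles and robots following $F$ on adjacent $C_i,C_j$ are at $\phi_{ij},\phi_{ji}$ at exactly the same times. A synchronized communication system (SCS) consists of robots, initially one per circle, following a synchronization schedule, with the switching rule: when a robot on $C_i$ reaches $\phi_{ij}$ and $C_j$ is empty, it instantly passes to $C_j$ and follows the schedule of $C_j$; if $C_j$ has a robot, they meet and each stays on its circle. A partial SCS arises by letting some robots leave (possibly at different times); remaining robots never leave. A surviving robot $u$ starves if every time $u$ arrives at a link position $\phi_{ij}$ of its current circle $C_i$, the circle $C_j$ is empty. Grid. The $n\times m$ grid communication graph consists of $nm$ unit circles, circle $(i,j)$ in row $i$ (rows horizontal) and column $j$ (columns vertical), centres on a square lattice, circle $(i,j)$ adjacent exactly to the existing circles $(i\pm1,j)$, $(i,j\pm1)$. *)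

theory Defs
  imports Complex_Main
begin

text \<open>Trajectories are unit circles indexed by a vertex set V;
  circle a has centre c a (a point of the plane, represented as a complex number).
  Angles are represented through the point they determine on the circle:
  the point at angle theta on circle a is c a + cis theta.\<close>

text \<open>The point of the unit circle centred at ci closest to the unit circle centred at cj
  (the point whose angle is the link position).\<close>
definition link_pt :: "complex \<Rightarrow> complex \<Rightarrow> complex" where
  "link_pt ci cj = ci + sgn (cj - ci)"

definition comm_adj :: "('v \<Rightarrow> complex) \<Rightarrow> real \<Rightarrow> 'v set \<Rightarrow> 'v \<Rightarrow> 'v \<Rightarrow> bool" where
  "comm_adj c r V a b \<longleftrightarrow> a \<in> V \<and> b \<in> V \<and> a \<noteq> b \<and> cmod (c a - c b) \<le> 2 + r"

definition sched_pt ::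
  "('v \<Rightarrow> complex) \<Rightarrow> ('v \<Rightarrow> real) \<Rightarrow> ('v \<Rightarrow> int) \<Rightarrow> 'v \<Rightarrow> real \<Rightarrow> complex" where
  "sched_pt c f g a t = c a + cis (f a + of_int (g a) * 2 * pi * t)"

definition sync_schedule ::
  "('v \<Rightarrow> complex) \<Rightarrow> real \<Rightarrow> 'v set \<Rightarrow> ('v \<Rightarrow> real) \<Rightarrow> ('v \<Rightarrow> int) \<Rightarrow> bool" where
  "sync_schedule c r V f g \<longleftrightarrow>
     (\<forall>a\<in>V. g a = 1 \<or> g a = -1) \<and>
     (\<forall>a b. comm_adj c r V a b \<longrightarrow>
        g a = - g b \<and>
        (\<forall>t::real. sched_pt c f g a t = link_pt (c a) (c b) \<longleftrightarrow>
                   sched_pt c f g b t = link_pt (c b) (c a)))"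

definition occ_pre :: "'v set \<Rightarrow> ('v \<Rightarrow> real \<Rightarrow> 'v option) \<Rightarrow> real \<Rightarrow> 'v \<Rightarrow> bool" where
  "occ_pre V pre t b \<longleftrightarrow> (\<exists>w\<in>V. pre w t = Some b)"

text \<open>Robots are named by their initial circle (one robot per
  circle initially). loc u t is the circle of robot u at time t (None = robot has left),
  right-continuous; pre u t is its circle just before time t (left limit), and for t = 0
  the initial circle. At every time t the switching rule is applied w.r.t. the
  configuration just before t; any robot may leave at any time and never returns.\<close>
definition partial_scs_run ::
  "('v \<Rightarrow> complex) \<Rightarrow> real \<Rightarrow> 'v set \<Rightarrow> ('v \<Rightarrow> real) \<Rightarrow> ('v \<Rightarrow> int)
     \<Rightarrow> ('v \<Rightarrow> real \<Rightarrow> 'v option) \<Rightarrow> ('v \<Rightarrow> real \<Rightarrow> 'v option) \<Rightarrow> bool" where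
  "partial_scs_run c r V f g loc pre \<longleftrightarrow>
     sync_schedule c r V f g \<and>
     (\<forall>u\<in>V. pre u 0 = Some u) \<and>
     (\<forall>u\<in>V. \<forall>t\<ge>0.
        (\<exists>\<epsilon>>0. \<forall>s. t < s \<and> s < t + \<epsilon> \<longrightarrow> loc u s = loc u t) \<and>
        (t > 0 \<longrightarrow> (\<exists>\<epsilon>>0. \<forall>s. t - \<epsilon> < s \<and> s < t \<longrightarrow> loc u s = pre u t)) \<and>
        (pre u t = None \<longrightarrow> loc u t = None) \<and>
        (\<forall>a. pre u t = Some a \<longrightarrow>
           loc u t = None \<or>
           (\<exists>b. comm_adj c r V a b \<and> sched_pt c f g a t = link_pt (c a) (c b) \<and>
                \<not> occ_pre V pre t b \<and> loc u t = Some b) \<or>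
           (loc u t = Some a \<and>
              \<not> (\<exists>b. comm_adj c r V a b \<and> sched_pt c f g a t = link_pt (c a) (c b) \<and>
                     \<not> occ_pre V pre t b))))"

definition surviving :: "('v \<Rightarrow> real \<Rightarrow> 'v option) \<Rightarrow> 'v \<Rightarrow> bool" where
  "surviving loc u \<longleftrightarrow> (\<forall>t\<ge>0. loc u t \<noteq> None)"

definition starves ::
  "('v \<Rightarrow> complex) \<Rightarrow> real \<Rightarrow> 'v set \<Rightarrow> ('v \<Rightarrow> real) \<Rightarrow> ('v \<Rightarrow> int)
     \<Rightarrow> ('v \<Rightarrow> real \<Rightarrow> 'v option) \<Rightarrow> ('v \<Rightarrow> real \<Rightarrow> 'v option) \<Rightarrow> 'v \<Rightarrow> bool" where
  "starves c r V f g loc pre u \<longleftrightarrow>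
     surviving loc u \<and>
     (\<forall>t\<ge>0. \<forall>a b. pre u t = Some a \<and> comm_adj c r V a b \<and>
                    sched_pt c f g a t = link_pt (c a) (c b) \<longrightarrow> \<not> occ_pre V pre t b)"

text \<open>Grid: circle (i,j) in row i and column j.\<close>
definition grid_cells :: "nat \<Rightarrow> nat \<Rightarrow> (nat \<times> nat) set" where
  "grid_cells n m = {0..<n} \<times> {0..<m}"

definition grid_adj :: "nat \<times> nat \<Rightarrow> nat \<times> nat \<Rightarrow> bool" where
  "grid_adj p q \<longleftrightarrow>
     (fst p = fst q \<and> (snd q = snd p + 1 \<or> snd p = snd q + 1)) \<or>
     (snd p = snd q \<and> (fst q = fst p + 1 \<or> fst p = fst q + 1))"

definition grid_system :: "nat \<Rightarrow> nat \<Rightarrow> real \<Rightarrow> (nat \<times> nat \<Rightarrow> complex) \<Rightarrow> bool" where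
  "grid_system n m r c \<longleftrightarrow>
     r > 0 \<and>
     (\<exists>c0 e \<sigma>. e \<noteq> 0 \<and> (\<sigma> = 1 \<or> \<sigma> = -1) \<and>
        (\<forall>i j. c (i, j) = c0 + of_nat j * e + of_nat i * (\<sigma> * \<i> * e))) \<and>
     (\<forall>p\<in>grid_cells n m. \<forall>q\<in>grid_cells n m. p \<noteq> q \<longrightarrow> cmod (c p - c q) > 2) \<and>
     (\<forall>p q. comm_adj c r (grid_cells n m) p q \<longleftrightarrow>
            p \<in> grid_cells n m \<and> q \<in> grid_cells n m \<and> grid_adj p q)"

end

theory Submission
  imports Defs
begin

text \<open>
  All robots of a synchronization schedule on the grid reach link positions simultaneously, four
  times per period, and the integer phase of such an event decides the link every robot is at:
  even phases give horizontal links, odd phases vertical ones, and the parity of the position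
  decides between the two directions. A starving robot passes every time it is at a link, so its
  row and its column each follow a deterministic walk that reflects at the border of the grid.
  Folding the cycle of length 2N onto {0..<N}, such a walk becomes a rotation, which is
  injective and moves all walkers by the same amount. Hence two starving robots that are ever
  in the same row were there from the start and stay there forever, while their columns, being
  distinct walkers on a common rotation, eventually become adjacent with one robot at the link
  towards the other. At that moment the first robot finds the circle of the second occupied and
  does not starve.
\<close>

section \<open>Reflecting walks\<close>

definition bounce :: "nat \<Rightarrow> int \<Rightarrow> nat \<Rightarrow> nat" where
  "bounce N q x =
     (if odd q then x
      else if even (int x + q div 2) then (if x + 1 < N then x + 1 else x)
      else if 0 < x then x - 1 else x)"

primrec bounce_walk :: "nat \<Rightarrow> int \<Rightarrow> nat \<Rightarrow> nat \<Rightarrow> nat" where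
  "bounce_walk N Q x 0 = x"
| "bounce_walk N Q x (Suc k) = bounce N (Q + int k) (bounce_walk N Q x k)"

lemma bounce_lt: "x < N \<Longrightarrow> bounce N q x < N"
  by (auto simp: bounce_def)

lemma bounce_walk_lt: "x < N \<Longrightarrow> bounce_walk N Q x k < N"
  by (induction k) (simp_all add: bounce_lt)

lemma bounce_odd: "odd q \<Longrightarrow> bounce N q x = x"
  by (simp add: bounce_def)

lemma bounce_sign:
  assumes "s = 1 \<or> s = -1"
  shows "bounce N (s * q) x = bounce N q x"
proof (cases "even q")
  case True
  then obtain h where "q = 2 * h" ..
  moreover have "even (int x - h) = even (int x + h)" by presburger
  ultimately show ?thesis using assms by (auto simp: bounce_def)
qed (use assms in \<open>auto simp: bounce_def\<close>)

text \<open>Folding the cycle of length 2N onto {0..<N}: a walker at x at phase q sits at position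
  cycle_pos N q x of the cycle. One step of bounce advances this position by one at even
  phases and leaves it unchanged at odd ones, so cycle_coord, which subtracts this drift, is
  invariant along a walk.\<close>
definition cycle_pos :: "nat \<Rightarrow> int \<Rightarrow> nat \<Rightarrow> int" where
  "cycle_pos N q x = (if even (int x + (q + 1) div 2) then int x else 2 * int N - 1 - int x)"

lemma cycle_pos_range: "x < N \<Longrightarrow> 0 \<le> cycle_pos N q x \<and> cycle_pos N q x < 2 * int N"
  by (auto simp: cycle_pos_def)

lemma cycle_pos_inj: "x < N \<Longrightarrow> y < N \<Longrightarrow> cycle_pos N q x = cycle_pos N q y \<Longrightarrow> x = y"
  by (auto simp: cycle_pos_def split: if_splits)

lemma cycle_pos_parity: "even (cycle_pos N q x + (q + 1) div 2)"
  by (auto simp: cycle_pos_def)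

lemma cycle_pos_bounce:
  assumes "x < N"
  shows "cycle_pos N (q + 1) (bounce N q x) mod (2 * int N)
       = (cycle_pos N q x + (q + 2) div 2 - (q + 1) div 2) mod (2 * int N)"
proof -
  define v where "v = cycle_pos N q x + (q + 2) div 2 - (q + 1) div 2"
  have "cycle_pos N (q + 1) (bounce N q x) = v \<or> cycle_pos N (q + 1) (bounce N q x) = v - 2 * int N"
  proof (cases "even q")
    case True
    then obtain h where q: "q = 2 * h" ..
    have "(q + 1) div 2 = h" "(q + 2) div 2 = h + 1" "(q + 1 + 1) div 2 = h + 1" using q by auto
    then show ?thesis using assms unfolding v_def cycle_pos_def bounce_def q by auto presburger+
  next
    case False
    then obtain h where q: "q = 2 * h + 1" ..
    have "(q + 1) div 2 = h + 1" "(q + 2) div 2 = h + 1" "(q + 1 + 1) div 2 = h + 1" using q by auto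
    then show ?thesis using assms unfolding v_def cycle_pos_def bounce_def q by auto
  qed
  then show ?thesis unfolding v_def by auto
qed

definition cycle_coord :: "nat \<Rightarrow> int \<Rightarrow> nat \<Rightarrow> int" where
  "cycle_coord N q x = (cycle_pos N q x - (q + 1) div 2) mod (2 * int N)"

lemma cycle_pos_mod_cycle_coord:
  "cycle_pos N q x mod (2 * int N) = (cycle_coord N q x + (q + 1) div 2) mod (2 * int N)"
  unfolding cycle_coord_def by (simp add: mod_add_left_eq)

lemma cycle_coord_bounce: "x < N \<Longrightarrow> cycle_coord N (q + 1) (bounce N q x) = cycle_coord N q x"
proof -
  assume "x < N"
  let ?M = "2 * int N"
  have "cycle_coord N (q + 1) (bounce N q x) = (cycle_pos N (q + 1) (bounce N q x) mod ?M - (q + 2) div 2) mod ?M"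
    unfolding cycle_coord_def by (simp add: mod_diff_left_eq add.assoc)
  also have "\<dots> = ((cycle_pos N q x + (q + 2) div 2 - (q + 1) div 2) mod ?M - (q + 2) div 2) mod ?M"
    by (simp only: cycle_pos_bounce[OF \<open>x < N\<close>])
  also have "\<dots> = cycle_coord N q x"
    unfolding cycle_coord_def by (simp add: mod_diff_left_eq)
  finally show ?thesis .
qed

lemma cycle_coord_walk: "x < N \<Longrightarrow> cycle_coord N (Q + int k) (bounce_walk N Q x k) = cycle_coord N Q x"
proof (induction k)
  case (Suc k)
  have "cycle_coord N (Q + int (Suc k)) (bounce_walk N Q x (Suc k))
      = cycle_coord N (Q + int k + 1) (bounce N (Q + int k) (bounce_walk N Q x k))"
    by (simp add: ac_simps)
  also have "\<dots> = cycle_coord N (Q + int k) (bounce_walk N Q x k)"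
    by (rule cycle_coord_bounce[OF bounce_walk_lt[OF Suc.prems]])
  finally show ?case using Suc by simp
qed simp

lemma cycle_coord_inj:
  assumes "x < N" "y < N" "cycle_coord N q x = cycle_coord N q y"
  shows "x = y"
proof -
  have "cycle_pos N q x mod (2 * int N) = cycle_pos N q y mod (2 * int N)"
    unfolding cycle_pos_mod_cycle_coord assms(3) ..
  then have "cycle_pos N q x = cycle_pos N q y"
    using cycle_pos_range[OF assms(1)] cycle_pos_range[OF assms(2)] by simp
  then show ?thesis using cycle_pos_inj assms(1,2) by blast
qed

lemma bounce_walk_inj:
  assumes "x < N" "y < N" "bounce_walk N Q x k = bounce_walk N Q y k"
  shows "x = y"
proof (rule cycle_coord_inj[OF assms(1,2)])
  show "cycle_coord N Q x = cycle_coord N Q y"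
    using cycle_coord_walk[OF assms(1), of Q k] cycle_coord_walk[OF assms(2), of Q k] assms(3) by simp
qed

lemma even_cycle_coord: "even (cycle_coord N q x)"
proof -
  have "even (cycle_pos N q x - (q + 1) div 2)"
    using cycle_pos_parity[of N q x] by presburger
  then show ?thesis unfolding cycle_coord_def by (simp add: dvd_mod)
qed

lemma mod_eq_minus_two_cases:
  fixes s N :: int
  assumes "N \<ge> 2" "0 \<le> s" "s \<le> 4 * N - 2" "s mod (2 * N) = (2 * N - 2) mod (2 * N)"
  shows "s = 2 * N - 2 \<or> s = 4 * N - 2"
proof -
  have m: "(2 * N - 2) mod (2 * N) = 2 * N - 2" by (rule mod_pos_pos_trivial) (use assms(1) in auto)
  have d: "s = 2 * N * (s div (2 * N)) + s mod (2 * N)" by simp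
  have "0 \<le> s div (2 * N)" using assms by (simp add: pos_imp_zdiv_nonneg_iff)
  moreover have "s div (2 * N) < 2"
  proof (rule ccontr)
    assume "\<not> s div (2 * N) < 2"
    then have "2 * N * (s div (2 * N)) \<ge> 2 * N * 2" using assms(1) by (intro mult_left_mono) auto
    then show False using d m assms by linarith
  qed
  ultimately have "s div (2 * N) = 0 \<or> s div (2 * N) = 1" by linarith
  then show ?thesis using d m assms(4) by auto
qed

lemma cycle_pos_collide:
  assumes a: "a < N" and b: "b < N" and "a \<noteq> b"
    and sum: "(cycle_pos N (2 * M) a + cycle_pos N (2 * M) b) mod (2 * int N) = (2 * int N - 2) mod (2 * int N)"
  shows "bounce N (2 * M) a = b \<or> bounce N (2 * M) b = a"
proof -
  have "int N \<ge> 2" using assms by linarith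
  moreover have "0 \<le> cycle_pos N (2 * M) a + cycle_pos N (2 * M) b"
    and "cycle_pos N (2 * M) a + cycle_pos N (2 * M) b \<le> 4 * int N - 2"
    using cycle_pos_range[OF a, of "2 * M"] cycle_pos_range[OF b, of "2 * M"] by linarith+
  ultimately have "cycle_pos N (2 * M) a + cycle_pos N (2 * M) b \<in> {2 * int N - 2, 4 * int N - 2}"
    using mod_eq_minus_two_cases[OF _ _ _ sum] by simp
  moreover have "(2 * M + 1) div 2 = M" by simp
  ultimately show ?thesis using assms unfolding cycle_pos_def bounce_def
    by (auto split: if_splits)
qed

lemma bounce_walks_collide:
  assumes x: "x < N" and y: "y < N" and "x \<noteq> y"
  shows "\<exists>k. bounce N (Q + int k) (bounce_walk N Q x k) = bounce_walk N Q y k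
           \<or> bounce N (Q + int k) (bounce_walk N Q y k) = bounce_walk N Q x k"
proof -
  txt \<open>Choose an even phase 2 M at which the cycle positions of the two walkers add up to
    2 N - 2 modulo 2 N; by cycle_pos_collide one walker is then about to step onto the other.\<close>
  obtain R where R: "cycle_coord N Q x + cycle_coord N Q y = 2 * R"
    using even_cycle_coord[of N Q x] even_cycle_coord[of N Q y] by (metis evenE even_add)
  define M where "M = (- 1 - R) mod int N + int N * \<bar>Q\<bar>"
  have "int N * \<bar>Q\<bar> \<ge> \<bar>Q\<bar>" "(- 1 - R) mod int N \<ge> 0" using x by (simp_all add: mult_le_cancel_right1)
  then have "Q \<le> M" "0 \<le> M" using abs_ge_self[of Q] unfolding M_def by linarith+
  then have "Q \<le> 2 * M" by linarith
  then obtain k where k: "Q + int k = 2 * M" using zle_iff_zadd by metis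
  let ?a = "bounce_walk N Q x k" and ?b = "bounce_walk N Q y k"
  have ab: "?a < N" "?b < N" "?a \<noteq> ?b"
    using bounce_walk_lt[OF x] bounce_walk_lt[OF y] bounce_walk_inj[OF x y] \<open>x \<noteq> y\<close> by auto
  have pos_coord: "cycle_pos N (2 * M) z mod (2 * int N) = (cycle_coord N (2 * M) z + M) mod (2 * int N)" for z
    using cycle_pos_mod_cycle_coord[of N "2 * M" z] by simp
  have "(M + R) mod int N = (- 1) mod int N"
    unfolding M_def by (metis diff_add_cancel mod_add_left_eq mod_mult_self2)
  also have "\<dots> = (int N - 1) mod int N"
    by (metis add.commute diff_conv_add_uminus mod_add_self2)
  finally have sum_R: "(2 * (M + R)) mod (2 * int N) = (2 * int N - 2) mod (2 * int N)"
    by (metis mod_mult_mult1 right_diff_distrib mult_1_right)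
  have "cycle_coord N (2 * M) ?a = cycle_coord N Q x" "cycle_coord N (2 * M) ?b = cycle_coord N Q y"
    using cycle_coord_walk[OF x, of Q k] cycle_coord_walk[OF y, of Q k] unfolding k by auto
  then have coord_sum: "cycle_coord N (2 * M) ?a + M + (cycle_coord N (2 * M) ?b + M) = 2 * (M + R)"
    using R by simp
  have "(cycle_pos N (2 * M) ?a + cycle_pos N (2 * M) ?b) mod (2 * int N)
      = (cycle_pos N (2 * M) ?a mod (2 * int N) + cycle_pos N (2 * M) ?b mod (2 * int N)) mod (2 * int N)"
    by (rule mod_add_eq[symmetric])
  also have "\<dots> = (cycle_coord N (2 * M) ?a + M + (cycle_coord N (2 * M) ?b + M)) mod (2 * int N)"
    unfolding pos_coord by (rule mod_add_eq)
  also have "\<dots> = (2 * int N - 2) mod (2 * int N)"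
    unfolding coord_sum by (rule sum_R)
  finally have "(cycle_pos N (2 * M) ?a + cycle_pos N (2 * M) ?b) mod (2 * int N)
      = (2 * int N - 2) mod (2 * int N)" .
  then have "bounce N (Q + int k) ?a = ?b \<or> bounce N (Q + int k) ?b = ?a"
    unfolding k using cycle_pos_collide[OF ab] by blast
  then show ?thesis by blast
qed

lemma locally_const_on_atLeastLessThan:
  fixes L P :: "real \<Rightarrow> 'b"
  assumes right: "\<And>t. a \<le> t \<Longrightarrow> t < b \<Longrightarrow> \<exists>\<epsilon>>0. \<forall>s. t < s \<and> s < t + \<epsilon> \<longrightarrow> L s = L t"
    and left: "\<And>t. a < t \<Longrightarrow> t < b \<Longrightarrow> \<exists>\<epsilon>>0. \<forall>s. t - \<epsilon> < s \<and> s < t \<longrightarrow> L s = P t"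
    and left_lim: "\<And>t. a < t \<Longrightarrow> t < b \<Longrightarrow> L t = P t"
    and s: "a \<le> s" "s < b"
  shows "L s = L a"
proof -
  have "L a = L s"
  proof (rule connected_local_const[where A="{a..<b}"])
    show "connected {a..<b}" by simp
    show "a \<in> {a..<b}" "s \<in> {a..<b}" using s by auto
    show "\<forall>x\<in>{a..<b}. eventually (\<lambda>y. L x = L y) (at x within {a..<b})"
    proof
      fix x assume x: "x \<in> {a..<b}"
      obtain e1 where e1: "e1 > 0" "\<forall>s. x < s \<and> s < x + e1 \<longrightarrow> L s = L x"
        using right x by auto
      show "eventually (\<lambda>y. L x = L y) (at x within {a..<b})"
      proof (cases "a < x")
        case True
        obtain e2 where e2: "e2 > 0" "\<forall>s. x - e2 < s \<and> s < x \<longrightarrow> L s = P x"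
          using left True x by auto
        have "L x = P x" using left_lim True x by auto
        show ?thesis unfolding eventually_at
        proof (intro exI[of _ "min e1 e2"] conjI ballI impI)
          fix y assume "y \<noteq> x \<and> dist y x < min e1 e2"
          then have "y < x \<or> x < y" "\<bar>y - x\<bar> < e1" "\<bar>y - x\<bar> < e2" by (auto simp: dist_real_def)
          then show "L x = L y" using e1 e2 \<open>L x = P x\<close> by (metis abs_diff_less_iff add.commute)
        qed (use e1 e2 in simp)
      next
        case False
        then have "x = a" using x by auto
        then show ?thesis unfolding eventually_at
          using e1 by (intro exI[of _ e1]) (auto simp: dist_real_def)
      qed
    qed
  qed
  then show ?thesis by simp
qed

section \<open>Quarter turns\<close>

lemma cis_quarter_eq_iff: "cis (pi/2 * x) = cis (pi/2 * y) \<longleftrightarrow> (\<exists>k::int. x - y = 4 * of_int k)"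
proof -
  have "cis (pi/2 * x) = cis (pi/2 * y) \<longleftrightarrow> cis (pi/2 * (x - y)) = 1"
    by (simp add: cis_divide[symmetric] right_diff_distrib)
  also have "\<dots> \<longleftrightarrow> cos (pi/2 * (x - y)) = 1"
    by (auto simp: complex_eq_iff cos_one_sin_zero)
  also have "\<dots> \<longleftrightarrow> (\<exists>k::int. pi/2 * (x - y) = of_int k * 2 * pi)"
    by (rule cos_one_2pi_int)
  also have "\<dots> \<longleftrightarrow> (\<exists>k::int. x - y = 4 * of_int k)"
  proof (intro ex_cong1)
    fix k :: int
    have "pi/2 * (x - y) = of_int k * 2 * pi \<longleftrightarrow> pi/2 * (x - y) = pi/2 * (4 * of_int k)"
      by (simp add: algebra_simps)
    then show "pi/2 * (x - y) = of_int k * 2 * pi \<longleftrightarrow> x - y = 4 * of_int k"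
      by simp
  qed
  finally show ?thesis .
qed

lemma cis_quarter_eq_int_iff:
  "cis (pi/2 * x) = cis (pi/2 * of_int d) \<longleftrightarrow> (\<exists>w::int. x = of_int w \<and> (w - d) mod 4 = 0)"
proof -
  have "(\<exists>k::int. x - of_int d = 4 * of_int k) \<longleftrightarrow> (\<exists>w::int. x = of_int w \<and> 4 dvd (w - d))"
  proof
    assume "\<exists>k::int. x - of_int d = 4 * of_int k"
    then obtain k :: int where "x = of_int (4 * k + d)" by (auto simp: algebra_simps)
    then show "\<exists>w::int. x = of_int w \<and> 4 dvd (w - d)" by (intro exI[of _ "4 * k + d"]) simp
  next
    assume "\<exists>w::int. x = of_int w \<and> 4 dvd (w - d)"
    then obtain w k :: int where "x = of_int w" "w - d = 4 * k" by (auto elim: dvdE)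
    then show "\<exists>k::int. x - of_int d = 4 * of_int k" by (intro exI[of _ k]) (simp flip: of_int_diff)
  qed
  then show ?thesis unfolding cis_quarter_eq_iff by (simp only: dvd_eq_mod_eq_0)
qed

lemma cis_quarter_add_two: "cis (pi/2 * of_int (d + 2)) = - cis (pi/2 * of_int d)"
proof -
  have "cis (pi/2 * of_int (d + 2)) = cis (pi/2 * of_int d + pi)"
    by (simp add: algebra_simps)
  also have "\<dots> = cis (pi/2 * of_int d) * cis pi"
    by (rule cis_mult[symmetric])
  finally show ?thesis by simp
qed

lemma ex_int_affine_iff:
  fixes s a :: int and P :: real
  assumes "s * s = 1"
  shows "(\<exists>w::int. of_int a + of_int s * P = of_int w \<and> R w) \<longleftrightarrow> (\<exists>w::int. P = of_int w \<and> R (a + s * w))"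
proof
  assume "\<exists>w::int. of_int a + of_int s * P = of_int w \<and> R w"
  then obtain w :: int where w: "of_int a + of_int s * P = of_int w" "R w" by blast
  have "of_int s * (of_int a + of_int s * P) = of_int (s * w)" using w(1) by simp
  then have "P = of_int (s * (w - a))"
    using assms by (simp add: algebra_simps flip: of_int_mult)
  moreover have "a + s * (s * (w - a)) = w" using assms by (simp add: mult.assoc[symmetric])
  ultimately show "\<exists>w::int. P = of_int w \<and> R (a + s * w)" using w(2) by metis
next
  assume "\<exists>w::int. P = of_int w \<and> R (a + s * w)"
  then show "\<exists>w::int. of_int a + of_int s * P = of_int w \<and> R w"
    by (metis of_int_add of_int_mult)
qed

text \<open>The robot on circle (i, j) points in direction \<i> ^ d at integer phase w iff
  (2 j \<plusminus> w - d) mod 4 = 0, the sign depending on the parity of i + j; below, d runs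
  through the four link directions.\<close>
lemma quarter_east_iff:
  "(2 * int j + (if even (i + j) then w else - w)) mod 4 = 0 \<longleftrightarrow> even w \<and> even (int j + w div 2)"
  by (cases "even (i + j)") (simp_all, presburger+)

lemma quarter_west_iff:
  "(2 * int j + (if even (i + j) then w else - w) - 2) mod 4 = 0 \<longleftrightarrow> even w \<and> odd (int j + w div 2)"
  by (cases "even (i + j)") (simp_all, presburger+)

lemma quarter_north_iff:
  "d = 1 \<or> d = 3 \<Longrightarrow>
   (2 * int j + (if even (i + j) then w else - w) - d) mod 4 = 0 \<longleftrightarrow> odd w \<and> even (int i + (w - d) div 2)"
  by (cases "even (i + j)"; cases "even i") (auto, presburger+)

lemma quarter_south_iff:
  "d = 1 \<or> d = 3 \<Longrightarrow>
   (2 * int j + (if even (i + j) then w else - w) - (d + 2)) mod 4 = 0 \<longleftrightarrow> odd w \<and> odd (int i + (w - d) div 2)"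
  by (cases "even (i + j)"; cases "even i") (auto, presburger+)

lemma bounce_pair_east_iff:
  "Suc j < M \<Longrightarrow> odd d \<Longrightarrow>
   bounce N (w - d) i = i \<and> bounce M w j = Suc j \<longleftrightarrow> even w \<and> even (int j + w div 2)"
  by (auto simp: bounce_def)

lemma bounce_pair_west_iff:
  "odd d \<Longrightarrow> bounce N (w - d) i = i \<and> bounce M w (Suc j) = j \<longleftrightarrow> even w \<and> odd (int (Suc j) + w div 2)"
  by (auto simp: bounce_def)

lemma bounce_pair_north_iff:
  "Suc i < N \<Longrightarrow> odd d \<Longrightarrow>
   bounce N (w - d) i = Suc i \<and> bounce M w j = j \<longleftrightarrow> odd w \<and> even (int i + (w - d) div 2)"
  by (auto simp: bounce_def)

lemma bounce_pair_south_iff: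
  "odd d \<Longrightarrow> bounce N (w - d) (Suc i) = i \<and> bounce M w j = j \<longleftrightarrow> odd w \<and> odd (int (Suc i) + (w - d) div 2)"
  by (auto simp: bounce_def)

section \<open>Synchronization schedules on the grid\<close>

locale grid_schedule =
  fixes n m :: nat and r :: real and c :: "nat \<times> nat \<Rightarrow> complex"
    and f :: "nat \<times> nat \<Rightarrow> real" and g :: "nat \<times> nat \<Rightarrow> int"
    and c0 e \<sigma> :: complex
  assumes e_nonzero: "e \<noteq> 0" and sigma_cases: "\<sigma> = 1 \<or> \<sigma> = -1"
    and centre: "\<And>i j. c (i, j) = c0 + of_nat j * e + of_nat i * (\<sigma> * \<i> * e)"
    and comm_adj_iff: "\<And>p q. comm_adj c r (grid_cells n m) p q \<longleftrightarrow>
                p \<in> grid_cells n m \<and> q \<in> grid_cells n m \<and> grid_adj p q"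
    and sync: "sync_schedule c r (grid_cells n m) f g"
    and nonempty: "0 < n" "0 < m"
begin

abbreviation V :: "(nat \<times> nat) set" where "V \<equiv> grid_cells n m"

text \<open>Positions on the circles are measured relative to eps, the direction towards the
  eastern neighbour.\<close>
definition eps :: complex where "eps = sgn e"

definition theta :: "nat \<times> nat \<Rightarrow> real \<Rightarrow> real" where
  "theta a t = f a + of_int (g a) * 2 * pi * t"

definition rel_pos :: "nat \<times> nat \<Rightarrow> real \<Rightarrow> complex" where
  "rel_pos a t = cis (theta a t) / eps"

lemma eps_nonzero: "eps \<noteq> 0" and norm_eps: "norm eps = 1"
  using e_nonzero by (auto simp: eps_def norm_sgn sgn_zero_iff)

lemma sched_pt_eq_iff_rel_pos: "sched_pt c f g a t = c a + eps * d \<longleftrightarrow> rel_pos a t = d"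
  using eps_nonzero by (auto simp: sched_pt_def theta_def rel_pos_def field_simps)

lemma norm_sigma_i: "norm (\<sigma> * \<i>) = 1"
  using sigma_cases by auto

lemma link_pt_east: "link_pt (c (i, j)) (c (i, Suc j)) = c (i, j) + eps * 1"
  unfolding link_pt_def eps_def by (simp add: centre algebra_simps)

lemma link_pt_west: "link_pt (c (i, Suc j)) (c (i, j)) = c (i, Suc j) + eps * (-1)"
proof -
  have "c (i, j) - c (i, Suc j) = - e" by (simp add: centre algebra_simps)
  then show ?thesis unfolding link_pt_def eps_def by (simp add: sgn_minus)
qed

lemma link_pt_north: "link_pt (c (i, j)) (c (Suc i, j)) = c (i, j) + eps * (\<sigma> * \<i>)"
proof -
  have "c (Suc i, j) - c (i, j) = (\<sigma> * \<i>) * e" by (simp add: centre algebra_simps)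
  moreover have "sgn (\<sigma> * \<i>) = \<sigma> * \<i>" using norm_sigma_i by (simp add: sgn_div_norm)
  ultimately show ?thesis unfolding link_pt_def eps_def by (simp add: sgn_mult mult.commute)
qed

lemma link_pt_south: "link_pt (c (Suc i, j)) (c (i, j)) = c (Suc i, j) + eps * (- (\<sigma> * \<i>))"
proof -
  have "c (i, j) - c (Suc i, j) = (- (\<sigma> * \<i>)) * e" by (simp add: centre algebra_simps)
  moreover have "sgn (- (\<sigma> * \<i>)) = - (\<sigma> * \<i>)" using norm_sigma_i by (simp add: sgn_div_norm)
  ultimately show ?thesis unfolding link_pt_def eps_def by (simp add: sgn_mult mult.commute)
qed

lemma direction_cases: "a \<in> V \<Longrightarrow> g a = 1 \<or> g a = -1"
  using sync unfolding sync_schedule_def by blast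

lemma rel_pos_surj:
  assumes "a \<in> V" and "norm d = 1"
  shows "\<exists>t. rel_pos a t = d"
proof -
  define t where "t = (Arg (d * eps) - f a) / (of_int (g a) * 2 * pi)"
  have "real_of_int (g a) \<noteq> 0" using direction_cases[OF assms(1)] by auto
  then have "theta a t = Arg (d * eps)" unfolding theta_def t_def by (simp add: field_simps)
  moreover have "d * eps \<noteq> 0" using assms(2) eps_nonzero by auto
  moreover have "sgn (d * eps) = d * eps" using assms(2) norm_eps by (simp add: sgn_div_norm norm_mult)
  ultimately have "cis (theta a t) = d * eps" by (simp add: cis_Arg)
  then show ?thesis using eps_nonzero unfolding rel_pos_def by (intro exI[of _ t]) simp
qed

text \<open>Adjacent robots turn in opposite directions, so the product of their positions is
  constant; it is read off at a time when both are at their common link.\<close>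
lemma rel_pos_adjacent:
  assumes adj: "comm_adj c r V a b" and "norm d = 1"
    and "link_pt (c a) (c b) = c a + eps * d" and "link_pt (c b) (c a) = c b + eps * d'"
  shows "rel_pos a t * rel_pos b t = d * d'"
proof -
  have opp: "g b = - g a"
    and link: "\<And>t. sched_pt c f g a t = link_pt (c a) (c b) \<longleftrightarrow> sched_pt c f g b t = link_pt (c b) (c a)"
    using sync adj unfolding sync_schedule_def by (metis equation_minus_iff)+
  have "a \<in> V" using adj by (simp add: comm_adj_def)
  then obtain t0 where t0: "rel_pos a t0 = d" using rel_pos_surj assms(2) by blast
  then have "rel_pos b t0 = d'"
    using link[of t0] assms(3,4) by (simp add: sched_pt_eq_iff_rel_pos)
  have "rel_pos a s * rel_pos b s = cis (f a + f b) / (eps * eps)" for s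
    unfolding rel_pos_def theta_def using opp by (simp add: cis_mult algebra_simps)
  then have "rel_pos a t * rel_pos b t = rel_pos a t0 * rel_pos b t0" by simp
  then show ?thesis using t0 \<open>rel_pos b t0 = d'\<close> by simp
qed

lemma rel_pos_east:
  assumes "(i, j) \<in> V" "(i, Suc j) \<in> V"
  shows "rel_pos (i, Suc j) t = - inverse (rel_pos (i, j) t)"
proof -
  have "comm_adj c r V (i, j) (i, Suc j)" using assms by (simp add: comm_adj_iff grid_adj_def)
  then have "rel_pos (i, j) t * rel_pos (i, Suc j) t = -1"
    using rel_pos_adjacent[of "(i, j)" "(i, Suc j)" 1] link_pt_east link_pt_west by simp
  moreover have "rel_pos (i, j) t \<noteq> 0" using eps_nonzero by (simp add: rel_pos_def)
  ultimately show ?thesis by (simp add: field_simps)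
qed

lemma rel_pos_north:
  assumes "(i, j) \<in> V" "(Suc i, j) \<in> V"
  shows "rel_pos (Suc i, j) t = inverse (rel_pos (i, j) t)"
proof -
  have "comm_adj c r V (i, j) (Suc i, j)" using assms by (simp add: comm_adj_iff grid_adj_def)
  then have "rel_pos (i, j) t * rel_pos (Suc i, j) t = (\<sigma> * \<i>) * (- (\<sigma> * \<i>))"
    using rel_pos_adjacent norm_sigma_i link_pt_north link_pt_south by blast
  also have "\<dots> = 1" using sigma_cases by auto
  finally have "rel_pos (i, j) t * rel_pos (Suc i, j) t = 1" .
  moreover have "rel_pos (i, j) t \<noteq> 0" using eps_nonzero by (simp add: rel_pos_def)
  ultimately show ?thesis by (simp add: field_simps)
qed

text \<open>rel_pos (0, 0) t is the phase t-th power of \<i>; robots sit at link positions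
  exactly when the phase is an integer.\<close>
definition phase :: "real \<Rightarrow> real" where
  "phase t = 2 / pi * (theta (0, 0) t - Arg eps)"

definition quarter_angle :: "nat \<times> nat \<Rightarrow> real \<Rightarrow> real" where
  "quarter_angle a t = 2 * real (snd a) + (if even (fst a + snd a) then phase t else - phase t)"

lemma rel_pos_origin: "rel_pos (0, 0) t = cis (pi/2 * phase t)"
proof -
  have "pi/2 * phase t = theta (0, 0) t - Arg eps" unfolding phase_def by simp
  then have "cis (pi/2 * phase t) = cis (theta (0, 0) t) / cis (Arg eps)"
    by (simp only: cis_divide)
  moreover have "cis (Arg eps) = eps" using eps_nonzero norm_eps by (simp add: cis_Arg sgn_div_norm)
  ultimately show ?thesis unfolding rel_pos_def by simp
qed

lemma rel_pos_first_row: "j < m \<Longrightarrow> rel_pos (0, j) t = cis (pi/2 * quarter_angle (0, j) t)"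
proof (induction j)
  case 0
  then show ?case by (simp add: rel_pos_origin quarter_angle_def)
next
  case (Suc j)
  let ?x = "quarter_angle (0, j) t"
  have "(0, j) \<in> V" "(0, Suc j) \<in> V" using Suc.prems nonempty by (auto simp: grid_cells_def)
  then have "rel_pos (0, Suc j) t = cis pi * cis (- (pi/2 * ?x))"
    using rel_pos_east Suc by simp
  also have "\<dots> = cis (pi + - (pi/2 * ?x))"
    by (rule cis_mult)
  also have "\<dots> = cis (pi/2 * (2 - ?x))"
    by (simp add: algebra_simps)
  also have "\<dots> = cis (pi/2 * quarter_angle (0, Suc j) t)"
    by (subst cis_quarter_eq_iff) (auto intro: exI[of _ "- int j"] simp: quarter_angle_def)
  finally show ?case .
qed

lemma rel_pos_quarter_angle: "a \<in> V \<Longrightarrow> rel_pos a t = cis (pi/2 * quarter_angle a t)"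
proof (induction a rule: prod.induct)
  case (Pair i j)
  then show ?case
  proof (induction i)
    case 0
    then show ?case using rel_pos_first_row by (simp add: grid_cells_def)
  next
    case (Suc i)
    have "(i, j) \<in> V" using Suc.prems by (auto simp: grid_cells_def)
    then have "rel_pos (Suc i, j) t = cis (pi/2 * - quarter_angle (i, j) t)"
      using rel_pos_north Suc by simp
    also have "\<dots> = cis (pi/2 * quarter_angle (Suc i, j) t)"
      by (subst cis_quarter_eq_iff) (auto intro: exI[of _ "- int j"] simp: quarter_angle_def)
    finally show ?case .
  qed
qed

definition north_quarter :: int where
  "north_quarter = (if \<sigma> = 1 then 1 else 3)"

lemma north_quarter_cases: "north_quarter = 1 \<or> north_quarter = 3"
  by (simp add: north_quarter_def)

lemma north_quarter_odd: "odd north_quarter"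
  by (simp add: north_quarter_def)

lemma north_eq_cis: "\<sigma> * \<i> = cis (pi/2 * of_int north_quarter)"
  using sigma_cases cis_quarter_add_two[of 1] by (auto simp: north_quarter_def)

lemma south_eq_cis: "- (\<sigma> * \<i>) = cis (pi/2 * of_int (north_quarter + 2))"
  by (simp only: cis_quarter_add_two north_eq_cis)

lemma sched_pt_at_quarter_iff:
  assumes "(i, j) \<in> V"
  shows "sched_pt c f g (i, j) t = c (i, j) + eps * cis (pi/2 * of_int d) \<longleftrightarrow>
    (\<exists>w::int. phase t = of_int w \<and> (2 * int j + (if even (i + j) then w else - w) - d) mod 4 = 0)"
proof -
  let ?s = "if even (i + j) then 1 else -1 :: int"
  have "quarter_angle (i, j) t = of_int (2 * int j) + of_int ?s * phase t"
    by (simp add: quarter_angle_def)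
  moreover have "?s * ?s = 1" by simp
  ultimately show ?thesis
    unfolding sched_pt_eq_iff_rel_pos rel_pos_quarter_angle[OF assms] cis_quarter_eq_int_iff
    using ex_int_affine_iff[of ?s "2 * int j" "phase t" "\<lambda>w. (w - d) mod 4 = 0"]
    by (cases "even (i + j)") auto
qed

text \<open>The circle that a starving robot on a passes to at an event of integer phase w.\<close>
definition event_step :: "int \<Rightarrow> nat \<times> nat \<Rightarrow> nat \<times> nat" where
  "event_step w a = (bounce n (w - north_quarter) (fst a), bounce m w (snd a))"

lemma event_step_in: "a \<in> V \<Longrightarrow> event_step w a \<in> V"
  by (auto simp: event_step_def grid_cells_def bounce_lt)

lemma link_east_iff:
  assumes "(i, j) \<in> V" "(i, Suc j) \<in> V"
  shows "sched_pt c f g (i, j) t = link_pt (c (i, j)) (c (i, Suc j)) \<longleftrightarrow>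
    (\<exists>w::int. phase t = of_int w \<and> event_step w (i, j) = (i, Suc j))"
  using sched_pt_at_quarter_iff[OF assms(1), of t 0] quarter_east_iff[of j i]
    bounce_pair_east_iff[OF _ north_quarter_odd, where N=n and M=m] assms(2)
  by (simp add: link_pt_east event_step_def grid_cells_def)

lemma link_west_iff:
  assumes "(i, Suc j) \<in> V"
  shows "sched_pt c f g (i, Suc j) t = link_pt (c (i, Suc j)) (c (i, j)) \<longleftrightarrow>
    (\<exists>w::int. phase t = of_int w \<and> event_step w (i, Suc j) = (i, j))"
  using sched_pt_at_quarter_iff[OF assms(1), of t 2] quarter_west_iff[of "Suc j" i]
    bounce_pair_west_iff[OF north_quarter_odd, where N=n and M=m]
  by (simp add: link_pt_west event_step_def)

lemma link_north_iff:
  assumes "(i, j) \<in> V" "(Suc i, j) \<in> V"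
  shows "sched_pt c f g (i, j) t = link_pt (c (i, j)) (c (Suc i, j)) \<longleftrightarrow>
    (\<exists>w::int. phase t = of_int w \<and> event_step w (i, j) = (Suc i, j))"
  using sched_pt_at_quarter_iff[OF assms(1), of t north_quarter]
    quarter_north_iff[OF north_quarter_cases, of j i]
    bounce_pair_north_iff[OF _ north_quarter_odd, where N=n and M=m] assms(2)
  by (simp add: link_pt_north north_eq_cis event_step_def grid_cells_def)

lemma link_south_iff:
  assumes "(Suc i, j) \<in> V"
  shows "sched_pt c f g (Suc i, j) t = link_pt (c (Suc i, j)) (c (i, j)) \<longleftrightarrow>
    (\<exists>w::int. phase t = of_int w \<and> event_step w (Suc i, j) = (i, j))"
  using sched_pt_at_quarter_iff[OF assms(1), of t "north_quarter + 2"]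
    quarter_south_iff[OF north_quarter_cases, of j "Suc i"]
    bounce_pair_south_iff[OF north_quarter_odd, where N=n and M=m]
  by (simp add: link_pt_south south_eq_cis event_step_def)

lemma event_step_grid_adj: "event_step w a \<noteq> a \<Longrightarrow> grid_adj a (event_step w a)"
  using north_quarter_odd
  by (cases a) (auto simp: event_step_def bounce_def grid_adj_def split: if_splits)

lemma link_adjacent_iff:
  assumes "a \<in> V" "b \<in> V" "grid_adj a b"
  shows "sched_pt c f g a t = link_pt (c a) (c b) \<longleftrightarrow>
    (\<exists>w::int. phase t = of_int w \<and> event_step w a = b)"
proof -
  obtain i j i' j' where ab: "a = (i, j)" "b = (i', j')" by fastforce
  from assms(3) consider "i' = i" "j' = Suc j" | "i' = i" "j = Suc j'"
    | "j' = j" "i' = Suc i" | "j' = j" "i = Suc i'"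
    unfolding ab grid_adj_def by auto
  then show ?thesis
    by cases (use assms link_east_iff link_west_iff link_north_iff link_south_iff in \<open>simp_all add: ab\<close>)
qed

lemma link_iff:
  assumes "a \<in> V"
  shows "(comm_adj c r V a b \<and> sched_pt c f g a t = link_pt (c a) (c b)) \<longleftrightarrow>
         (\<exists>w::int. phase t = of_int w \<and> b = event_step w a \<and> b \<noteq> a)"
proof
  assume "comm_adj c r V a b \<and> sched_pt c f g a t = link_pt (c a) (c b)"
  moreover have "comm_adj c r V a b \<Longrightarrow> b \<noteq> a" by (auto simp: comm_adj_def)
  ultimately show "\<exists>w::int. phase t = of_int w \<and> b = event_step w a \<and> b \<noteq> a"
    using link_adjacent_iff comm_adj_iff by metis
next
  assume "\<exists>w::int. phase t = of_int w \<and> b = event_step w a \<and> b \<noteq> a"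
  then obtain w :: int where w: "phase t = of_int w" "b = event_step w a" "b \<noteq> a" by blast
  then have "b \<in> V" "grid_adj a b" using event_step_in[OF assms] event_step_grid_adj by auto
  then show "comm_adj c r V a b \<and> sched_pt c f g a t = link_pt (c a) (c b)"
    using link_adjacent_iff[OF assms] comm_adj_iff assms w by blast
qed

text \<open>Events, i.e. times of integer phase, occur every quarter of a time unit; event k has
  phase spin * (first_phase + k), and epoch k lasts from event k - 1 to event k.\<close>
definition spin :: int where
  "spin = g (0, 0)"

definition first_phase :: int where
  "first_phase = \<lceil>of_int spin * phase 0\<rceil>"

definition event_time :: "nat \<Rightarrow> real" where
  "event_time k = (of_int first_phase - of_int spin * phase 0 + real k) / 4"

definition epoch_start :: "nat \<Rightarrow> real" where
  "epoch_start k = (case k of 0 \<Rightarrow> 0 | Suc k' \<Rightarrow> event_time k')"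

lemma spin_cases: "spin = 1 \<or> spin = -1"
  unfolding spin_def using direction_cases nonempty by (simp add: grid_cells_def)

lemma spin_squared: "of_int spin * of_int spin = (1::real)"
  using spin_cases by auto

lemma spin_phase: "of_int spin * phase t = of_int spin * phase 0 + 4 * t"
proof -
  have "2 / pi * (of_int spin * 2 * pi * t) = 4 * of_int spin * t" by simp
  then have "phase t = phase 0 + 4 * of_int spin * t"
    unfolding phase_def theta_def spin_def by (simp add: algebra_simps)
  then have "of_int spin * phase t = of_int spin * phase 0 + 4 * (of_int spin * of_int spin) * t"
    by (simp add: algebra_simps)
  then show ?thesis unfolding spin_squared by simp
qed

lemma four_event_time: "4 * event_time k = of_int first_phase - of_int spin * phase 0 + real k"
  unfolding event_time_def by simp

lemma event_time_nonneg: "0 \<le> event_time k"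
  using four_event_time[of k] ceiling_correct[of "of_int spin * phase 0"]
  unfolding first_phase_def by linarith

lemma first_event_time_less: "event_time 0 < 1/4"
  using four_event_time[of 0] ceiling_correct[of "of_int spin * phase 0"]
  unfolding first_phase_def by linarith

lemma phase_event_time: "phase (event_time k) = of_int (spin * (first_phase + int k))"
proof -
  have "of_int spin * phase (event_time k) = of_int (first_phase + int k)"
    using spin_phase[of "event_time k"] four_event_time[of k] by simp
  then have "of_int spin * (of_int spin * phase (event_time k)) = of_int spin * of_int (first_phase + int k)"
    by simp
  then show ?thesis unfolding mult.assoc[symmetric] spin_squared by simp
qed

lemma phase_not_int:
  assumes "event_time k - 1/4 < s" "s < event_time k"
  shows "\<not> (\<exists>w::int. phase s = of_int w)"
proof
  assume "\<exists>w::int. phase s = of_int w"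
  then obtain w :: int where "of_int spin * phase s = of_int (spin * w)" by auto
  then have "of_int (spin * w) = of_int spin * phase 0 + 4 * s" using spin_phase[of s] by linarith
  moreover have "real_of_int (first_phase + int k - 1) = of_int first_phase + real k - 1"
    "real_of_int (first_phase + int k) = of_int first_phase + real k" by simp_all
  ultimately have "real_of_int (first_phase + int k - 1) < of_int (spin * w)"
    "real_of_int (spin * w) < of_int (first_phase + int k)"
    using assms four_event_time[of k] by linarith+
  then have "first_phase + int k - 1 < spin * w" "spin * w < first_phase + int k"
    by (simp_all only: of_int_less_iff)
  then show False by linarith
qed

text \<open>The circles visited by a starving robot that starts on u, epoch by epoch.\<close>
definition route :: "nat \<times> nat \<Rightarrow> nat \<Rightarrow> nat \<times> nat" where
  "route u k = (bounce_walk n (first_phase - spin * north_quarter) (fst u) k,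
                bounce_walk m first_phase (snd u) k)"

lemma fst_route: "fst (route u k) = bounce_walk n (first_phase - spin * north_quarter) (fst u) k"
  and snd_route: "snd (route u k) = bounce_walk m first_phase (snd u) k"
  by (simp_all add: route_def)

lemma route_0: "route u 0 = u"
  by (simp add: route_def)

lemma route_Suc: "route u (Suc k) = event_step (spin * (first_phase + int k)) (route u k)"
proof -
  have "spin * (first_phase + int k) - north_quarter = spin * (first_phase - spin * north_quarter + int k)"
    using spin_cases by (auto simp: algebra_simps)
  then show ?thesis
    using bounce_sign[OF spin_cases] by (simp add: route_def event_step_def)
qed

lemma route_in: "u \<in> V \<Longrightarrow> route u k \<in> V"
  by (auto simp: route_def grid_cells_def bounce_walk_lt)

lemma route_inj:
  assumes "u \<in> V" "w \<in> V" "route u k = route w k"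
  shows "u = w"
proof -
  have "fst u < n" "fst w < n" "snd u < m" "snd w < m" using assms(1,2) by (auto simp: grid_cells_def)
  moreover have "fst (route u k) = fst (route w k)" "snd (route u k) = snd (route w k)"
    using assms(3) by simp_all
  ultimately have "fst u = fst w" "snd u = snd w"
    unfolding fst_route snd_route by (auto intro: bounce_walk_inj)
  then show ?thesis by (simp add: prod_eq_iff)
qed

end

section \<open>Starving robots\<close>

locale grid_run = grid_schedule +
  fixes loc pre :: "nat \<times> nat \<Rightarrow> real \<Rightarrow> (nat \<times> nat) option"
  assumes run: "partial_scs_run c r (grid_cells n m) f g loc pre"
begin

abbreviation starving :: "nat \<times> nat \<Rightarrow> bool" where
  "starving u \<equiv> starves c r V f g loc pre u"

lemma run_start: "u \<in> V \<Longrightarrow> pre u 0 = Some u"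
  using run unfolding partial_scs_run_def by blast

lemma run_at:
  assumes "u \<in> V" "0 \<le> t"
  shows "(\<exists>\<epsilon>>0. \<forall>s. t < s \<and> s < t + \<epsilon> \<longrightarrow> loc u s = loc u t) \<and>
    (t > 0 \<longrightarrow> (\<exists>\<epsilon>>0. \<forall>s. t - \<epsilon> < s \<and> s < t \<longrightarrow> loc u s = pre u t)) \<and>
    (pre u t = None \<longrightarrow> loc u t = None) \<and>
    (\<forall>a. pre u t = Some a \<longrightarrow>
       loc u t = None \<or>
       (\<exists>b. comm_adj c r V a b \<and> sched_pt c f g a t = link_pt (c a) (c b) \<and>
            \<not> occ_pre V pre t b \<and> loc u t = Some b) \<or>
       (loc u t = Some a \<and>
          \<not> (\<exists>b. comm_adj c r V a b \<and> sched_pt c f g a t = link_pt (c a) (c b) \<and>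
                 \<not> occ_pre V pre t b)))"
  using conjunct2[OF conjunct2[OF run[unfolded partial_scs_run_def]], rule_format, OF assms] .

lemma run_right_const:
  "u \<in> V \<Longrightarrow> 0 \<le> t \<Longrightarrow> \<exists>\<epsilon>>0. \<forall>s. t < s \<and> s < t + \<epsilon> \<longrightarrow> loc u s = loc u t"
  by (rule conjunct1[OF run_at])

lemma run_left_lim:
  "u \<in> V \<Longrightarrow> 0 < t \<Longrightarrow> \<exists>\<epsilon>>0. \<forall>s. t - \<epsilon> < s \<and> s < t \<longrightarrow> loc u s = pre u t"
  using conjunct1[OF conjunct2[OF run_at[of u t]]] by simp

lemma run_left_gone: "u \<in> V \<Longrightarrow> 0 \<le> t \<Longrightarrow> pre u t = None \<Longrightarrow> loc u t = None"
  using run_at by blast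

lemma run_switch:
  assumes "u \<in> V" "0 \<le> t" "pre u t = Some a" "loc u t \<noteq> None"
  shows "(\<exists>b. comm_adj c r V a b \<and> sched_pt c f g a t = link_pt (c a) (c b) \<and>
              \<not> occ_pre V pre t b \<and> loc u t = Some b) \<or>
         (loc u t = Some a \<and>
              \<not> (\<exists>b. comm_adj c r V a b \<and> sched_pt c f g a t = link_pt (c a) (c b) \<and>
                     \<not> occ_pre V pre t b))"
  using mp[OF spec[OF conjunct2[OF conjunct2[OF conjunct2[OF run_at[OF assms(1,2)]]]], of a] assms(3)]
    assms(4)
  by iprover

lemma starving_alive: "starving u \<Longrightarrow> 0 \<le> t \<Longrightarrow> loc u t \<noteq> None"
  unfolding starves_def surviving_def by blast

lemma starving_link_free:
  "starving u \<Longrightarrow> 0 \<le> t \<Longrightarrow> pre u t = Some a \<Longrightarrow> comm_adj c r V a b \<Longrightarrow>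
    sched_pt c f g a t = link_pt (c a) (c b) \<Longrightarrow> \<not> occ_pre V pre t b"
  unfolding starves_def by blast

lemma starving_at_event:
  assumes "u \<in> V" "starving u" "0 \<le> t" "pre u t = Some a" "a \<in> V" "phase t = of_int w"
  shows "loc u t = Some (event_step w a)"
proof -
  have alive: "loc u t \<noteq> None" using starving_alive assms(2,3) .
  note free = starving_link_free[OF assms(2-4)]
  from run_switch[OF assms(1,3,4) alive] consider
    (pass) b where "comm_adj c r V a b" "sched_pt c f g a t = link_pt (c a) (c b)" "loc u t = Some b"
  | (stay) "loc u t = Some a"
      "\<not> (\<exists>b. comm_adj c r V a b \<and> sched_pt c f g a t = link_pt (c a) (c b) \<and> \<not> occ_pre V pre t b)"
    by blast
  then show ?thesis
  proof cases
    case pass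
    then obtain w' :: int where "phase t = of_int w'" "b = event_step w' a"
      using link_iff[OF assms(5)] by blast
    then show ?thesis using pass assms(6) by simp
  next
    case stay
    show ?thesis
    proof (rule ccontr)
      assume "loc u t \<noteq> Some (event_step w a)"
      then have "event_step w a \<noteq> a" using stay(1) by auto
      then have "comm_adj c r V a (event_step w a)"
        "sched_pt c f g a t = link_pt (c a) (c (event_step w a))"
        using link_iff[OF assms(5)] assms(6) by blast+
      then show False using stay(2) free by blast
    qed
  qed
qed

lemma starving_between_events:
  assumes "u \<in> V" "starving u" "0 \<le> t" "\<not> (\<exists>w::int. phase t = of_int w)"
  shows "loc u t = pre u t"
proof -
  have alive: "loc u t \<noteq> None" using starving_alive assms(2,3) .
  then obtain a where a: "pre u t = Some a" using run_left_gone[OF assms(1,3)] by fastforce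
  have "sched_pt c f g a t \<noteq> link_pt (c a) (c b)" if "comm_adj c r V a b" for b
  proof -
    have "a \<in> V" using that by (simp add: comm_adj_def)
    then show ?thesis using link_iff that assms(4) by blast
  qed
  then show ?thesis using run_switch[OF assms(1,3) a alive] a by auto
qed

lemma starving_const_between_events:
  assumes "u \<in> V" "starving u" "0 \<le> a" "\<And>s. a < s \<Longrightarrow> s < b \<Longrightarrow> \<not> (\<exists>w::int. phase s = of_int w)"
    and "a \<le> s" "s < b"
  shows "loc u s = loc u a"
proof (rule locally_const_on_atLeastLessThan[where P = "pre u" and b = b])
  show "\<exists>\<epsilon>>0. \<forall>s. t < s \<and> s < t + \<epsilon> \<longrightarrow> loc u s = loc u t" if "a \<le> t" for t
    by (rule run_right_const[OF assms(1)]) (use assms(3) that in linarith)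
  show "\<exists>\<epsilon>>0. \<forall>s. t - \<epsilon> < s \<and> s < t \<longrightarrow> loc u s = pre u t" if "a < t" for t
    by (rule run_left_lim[OF assms(1)]) (use assms(3) that in linarith)
  show "loc u t = pre u t" if "a < t" "t < b" for t
    by (rule starving_between_events[OF assms(1,2)]) (use assms(3,4) that in auto)
qed (use assms(5,6) in auto)

lemma pre_eq_left_const:
  assumes "u \<in> V" "0 \<le> a" "a < t" "\<And>s. a \<le> s \<Longrightarrow> s < t \<Longrightarrow> loc u s = v"
  shows "pre u t = v"
proof -
  have "0 < t" using assms(2,3) by linarith
  then obtain \<epsilon> where \<epsilon>: "\<epsilon> > 0" "\<forall>s. t - \<epsilon> < s \<and> s < t \<longrightarrow> loc u s = pre u t"
    using run_left_lim[OF assms(1)] by blast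
  define s where "s = max (t - \<epsilon>/2) a"
  have "t - \<epsilon> < s" "s < t" "a \<le> s" unfolding s_def using \<epsilon> assms(3) by auto
  then have "loc u s = pre u t" "loc u s = v" using \<epsilon>(2) assms(4) by blast+
  then show ?thesis by simp
qed

lemma starving_route:
  assumes "u \<in> V" "starving u"
  shows "(\<forall>s. epoch_start k \<le> s \<and> s < event_time k \<longrightarrow> loc u s = Some (route u k))
    \<and> pre u (event_time k) = Some (route u k)"
proof (induction k)
  case 0
  show ?case
  proof (cases "event_time 0 = 0")
    case True
    then show ?thesis using run_start[OF assms(1)] by (auto simp: route_0 epoch_start_def)
  next
    case False
    then have pos: "0 < event_time 0" using event_time_nonneg[of 0] by simp
    have no_event: "\<And>s. 0 \<le> s \<Longrightarrow> s < event_time 0 \<Longrightarrow> \<not> (\<exists>w::int. phase s = of_int w)"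
      by (rule phase_not_int) (use first_event_time_less in auto)
    have "loc u 0 = Some u"
      using starving_between_events[OF assms, of 0] no_event pos run_start[OF assms(1)] by simp
    then have "\<forall>s. 0 \<le> s \<and> s < event_time 0 \<longrightarrow> loc u s = Some u"
      using starving_const_between_events[OF assms, of 0 "event_time 0"] no_event by auto
    moreover have "pre u (event_time 0) = Some u"
      using pre_eq_left_const[OF assms(1) _ pos] calculation by auto
    ultimately show ?thesis by (simp add: route_0 epoch_start_def)
  qed
next
  case (Suc k)
  let ?T = "event_time k" and ?T' = "event_time (Suc k)"
  have "route u k \<in> V" using route_in[OF assms(1)] .
  then have at_T: "loc u ?T = Some (route u (Suc k))"
    using starving_at_event[OF assms event_time_nonneg] Suc.IH phase_event_time by (simp add: route_Suc)
  have "?T' - 1/4 = ?T" by (simp add: event_time_def field_simps)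
  then have "\<forall>s. ?T \<le> s \<and> s < ?T' \<longrightarrow> loc u s = Some (route u (Suc k))"
    using starving_const_between_events[OF assms event_time_nonneg, of k ?T'] phase_not_int[of "Suc k"] at_T
    by auto
  moreover have "?T < ?T'" by (simp add: event_time_def)
  ultimately show ?case
    using pre_eq_left_const[OF assms(1) event_time_nonneg] by (simp add: epoch_start_def)
qed

lemma epoch_cover:
  assumes "0 \<le> t"
  obtains k where "epoch_start k \<le> t" "t < event_time k"
proof (cases "t < event_time 0")
  case True
  then show ?thesis using that[of 0] assms by (simp add: epoch_start_def)
next
  case False
  define q where "q = nat \<lfloor>4 * (t - event_time 0)\<rfloor>"
  have "real q = of_int \<lfloor>4 * (t - event_time 0)\<rfloor>" using False unfolding q_def by simp
  then have "real q \<le> 4 * (t - event_time 0)" "4 * (t - event_time 0) < real q + 1"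
    by linarith+
  moreover have "4 * event_time q = 4 * event_time 0 + real q"
    "4 * event_time (Suc q) = 4 * event_time 0 + real q + 1"
    using four_event_time by simp_all
  ultimately have "event_time q \<le> t" "t < event_time (Suc q)"
    by argo+
  then show ?thesis by (intro that[of "Suc q"]) (simp_all add: epoch_start_def)
qed

lemma starving_not_onto_starving:
  assumes "u \<in> V" "w \<in> V" "starving u" "starving w"
    and "route u k \<noteq> route w k" "route u (Suc k) = route w k"
  shows False
proof -
  let ?T = "event_time k"
  have pre_u: "pre u ?T = Some (route u k)" and pre_w: "pre w ?T = Some (route w k)"
    using conjunct2[OF starving_route] assms(1-4) by blast+
  have "phase ?T = of_int (spin * (first_phase + int k))"
    by (rule phase_event_time)
  moreover have "route w k = event_step (spin * (first_phase + int k)) (route u k)"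
    using assms(6) by (simp only: route_Suc)
  ultimately have "\<exists>v::int. phase ?T = of_int v \<and> route w k = event_step v (route u k) \<and>
      route w k \<noteq> route u k"
    using assms(5) by metis
  then have "comm_adj c r V (route u k) (route w k) \<and>
      sched_pt c f g (route u k) ?T = link_pt (c (route u k)) (c (route w k))"
    by (rule link_iff[OF route_in[OF assms(1)], THEN iffD2])
  then have "\<not> occ_pre V pre ?T (route w k)"
    using starving_link_free[OF assms(3) event_time_nonneg pre_u] by blast
  moreover have "occ_pre V pre ?T (route w k)"
    using assms(2) pre_w unfolding occ_pre_def by blast
  ultimately show False by blast
qed

text \<open>Routes of robots in the same row stay in the same row, and their columns follow two
  bounce walks driven by the same phases; these eventually collide.\<close>
lemma starving_routes_rows_differ:
  assumes "u \<in> V" "w \<in> V" "u \<noteq> w" "starving u" "starving w"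
  shows "fst (route u k) \<noteq> fst (route w k)"
proof
  have collision_impossible: False
    if "x \<in> V" "y \<in> V" "x \<noteq> y" "starving x" "starving y" "fst x = fst y"
      and col: "bounce m (first_phase + int k') (snd (route x k')) = snd (route y k')" for x y k'
  proof -
    have ne: "route x k' \<noteq> route y k'" using route_inj that(1-3) by blast
    moreover have row: "fst (route x k') = fst (route y k')" using that(6) by (simp add: fst_route)
    ultimately have "snd (route x k') \<noteq> snd (route y k')" by (simp add: prod_eq_iff)
    then have "even (first_phase + int k')" using col bounce_odd by metis
    then have "odd (first_phase - spin * north_quarter + int k')"
      using north_quarter_odd spin_cases by auto
    then have "route x (Suc k') = route y k'"
      using row col bounce_odd by (simp add: route_def prod_eq_iff)
    then show False by (rule starving_not_onto_starving[OF that(1,2,4,5) ne])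
  qed
  assume "fst (route u k) = fst (route w k)"
  moreover have "fst u < n" "fst w < n" "snd u < m" "snd w < m"
    using assms(1,2) by (auto simp: grid_cells_def)
  ultimately have same_row: "fst u = fst w"
    using bounce_walk_inj unfolding fst_route by blast
  then have "snd u \<noteq> snd w" using assms(3) by (simp add: prod_eq_iff)
  then obtain k' where "bounce m (first_phase + int k') (snd (route u k')) = snd (route w k') \<or>
      bounce m (first_phase + int k') (snd (route w k')) = snd (route u k')"
    using bounce_walks_collide \<open>snd u < m\<close> \<open>snd w < m\<close> unfolding snd_route by blast
  then show False
  proof
    assume "bounce m (first_phase + int k') (snd (route u k')) = snd (route w k')"
    then show False using collision_impossible assms same_row by blast
  next
    assume "bounce m (first_phase + int k') (snd (route w k')) = snd (route u k')"
    then show False using collision_impossible assms same_row[symmetric] by blast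
  qed
qed

end

theorem theorem9:
  fixes n m :: nat and r :: real and c :: "nat \<times> nat \<Rightarrow> complex"
    and f :: "nat \<times> nat \<Rightarrow> real" and g :: "nat \<times> nat \<Rightarrow> int"
    and loc pre :: "nat \<times> nat \<Rightarrow> real \<Rightarrow> (nat \<times> nat) option"
    and u w :: "nat \<times> nat" and t :: real and i j i' j' :: nat
  assumes "grid_system n m r c"
    and "partial_scs_run c r (grid_cells n m) f g loc pre"
    and "u \<in> grid_cells n m" and "w \<in> grid_cells n m" and "u \<noteq> w"
    and "starves c r (grid_cells n m) f g loc pre u"
    and "starves c r (grid_cells n m) f g loc pre w"
    and "t \<ge> 0" and "loc u t = Some (i, j)" and "loc w t = Some (i', j')"
  shows "i \<noteq> i'"
proof -
  from assms(1)[unfolded grid_system_def] obtain c0 e \<sigma> where "e \<noteq> 0" "\<sigma> = 1 \<or> \<sigma> = -1"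
    and "\<forall>i j. c (i, j) = c0 + of_nat j * e + of_nat i * (\<sigma> * \<i> * e)"
    and "\<forall>p q. comm_adj c r (grid_cells n m) p q \<longleftrightarrow>
      p \<in> grid_cells n m \<and> q \<in> grid_cells n m \<and> grid_adj p q"
    by (elim conjE exE)
  moreover have "sync_schedule c r (grid_cells n m) f g"
    using assms(2)[unfolded partial_scs_run_def] by (rule conjunct1)
  moreover have "0 < n" "0 < m" using assms(3) by (auto simp: grid_cells_def)
  ultimately interpret grid_run n m r c f g c0 e \<sigma> loc pre
    using assms(2) by unfold_locales blast+
  obtain k where "epoch_start k \<le> t" "t < event_time k"
    using epoch_cover assms(8) by blast
  then have "route u k = (i, j)" "route w k = (i', j')"
    using starving_route assms(3,4,6,7,9,10) by auto
  then show ?thesis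
    using starving_routes_rows_differ[OF assms(3-7)] by (metis fst_conv)
qed

end
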